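(* For integers $0\le\ell\le2n$ and $m$, let $q_{\ell,m,2n}$ be the weighted number of paths in the class $\mathcal{C}$ from $(\ell,m)$ to $(2n,0)$. Then \[ \frac{q_{\ell,j,2n}}{j+1}\ge\frac{q_{\ell,k,2n}}{k+1} \] for all integers $0\le j<k\le\ell\le2n$ with $k-j$ even and $n\ge10$.
   Context: The class $\mathcal{C}$ consists of lattice paths with steps in $\{(1,1),(1,-1),(2,-2),(3,-1),(3,1)\}$ never going below $y=0$, weighted as follows: a step ending at the point $(a,b)$ has weight $\frac{a-b+2}{a+b}$ if it is $(1,1)$, $\frac{a-b-2}{a-b}$ if it is $(1,-1)$, $\frac{2}{a-b}$ if it is $(2,-2)$, $\frac{2}{a+b}$ if it is $(3,-1)$, and $\frac{4}{(a+b)(a+b-2)}$ if it is $(3,1)$; the weight of a path is the product of its step weights. Equivalently, $q_{\ell,m,2n}=0$ if $m<0$ or $\ell>2n$, $q_{2n,m,2n}=\delta_{m,0}$, and for $\ell<2n$, $m\ge0$: \[ q_{\ell,m,2n}=\tfrac{\ell-m}{\ell-m+2}q_{\ell+1,m-1,2n}+\tfrac{\ell-m+2}{\ell+m+2}q_{\ell+1,m+1,2n}+\tfrac{2}{\ell-m+4}q_{\ell+2,m-2,2n}+\tfrac{2}{\ell+m+2}q_{\ell+3,m-1,2n}+\tfrac{4}{(\ell+m+4)(\ell+m+2)}q_{\ell+3,m+1,2n}. \] *)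

theory Defs
  imports Complex_Main
begin

function qC :: "nat \<Rightarrow> int \<Rightarrow> nat \<Rightarrow> real" where
  "qC l m n =
    (if m < 0 \<or> l > 2 * n then 0
     else if l = 2 * n then (if m = 0 then 1 else 0)
     else
       (let L = int l in
          real_of_int (L - m) / real_of_int (L - m + 2) * qC (l + 1) (m - 1) n
        + real_of_int (L - m + 2) / real_of_int (L + m + 2) * qC (l + 1) (m + 1) n
        + 2 / real_of_int (L - m + 4) * qC (l + 2) (m - 2) n
        + 2 / real_of_int (L + m + 2) * qC (l + 3) (m - 1) n
        + 4 / (real_of_int (L + m + 4) * real_of_int (L + m + 2)) * qC (l + 3) (m + 1) n))"
  by pat_completeness auto
termination
  by (relation "measure (\<lambda>(l, m, n). 2 * n - l)") auto

end

(*
  Write Q_l(m) for q_{l,m,2n}. It suffices to show (m+1) Q_l(m+2) <= (m+3) Q_l(m) for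
  -2 <= m <= l - 2 and to chain these steps. This is proved by downward induction on l.
  Expanding Q_l(m+2) and Q_l(m) by the recurrence, both are combinations of values in the
  columns l+1, l+2, l+3. The induction hypothesis compares neighbouring heights within each
  column, and since every term of the recurrence is nonnegative, Q_{l+2}(m) and Q_{l+3}(m+1)
  are bounded by explicit multiples of Q_{l+1}(m+1). After these substitutions only the signs
  of a few rational functions of l and m remain to be checked; cleared of denominators they
  become polynomials with nonnegative coefficients in m (or m - 1) and l - m - 2.
*)
theory Submission
  imports Defs
begin

declare qC.simps [simp del]

lemma qC_eq_0_if_neg: "m < 0 \<Longrightarrow> qC l m n = 0"
  by (subst qC.simps) simp

lemma qC_eq_0_if_beyond: "2 * n < l \<Longrightarrow> qC l m n = 0"
  by (subst qC.simps) simp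

lemma qC_end: "qC (2 * n) m n = (if m = 0 then 1 else 0)"
  by (subst qC.simps) simp

definition wt_down :: "real \<Rightarrow> real \<Rightarrow> real" where
  "wt_down L M = (L - M) / (L - M + 2)"

definition wt_up :: "real \<Rightarrow> real \<Rightarrow> real" where
  "wt_up L M = (L - M + 2) / (L + M + 2)"

definition wt_down2 :: "real \<Rightarrow> real \<Rightarrow> real" where
  "wt_down2 L M = 2 / (L - M + 4)"

definition wt_long_down :: "real \<Rightarrow> real \<Rightarrow> real" where
  "wt_long_down L M = 2 / (L + M + 2)"

definition wt_long_up :: "real \<Rightarrow> real \<Rightarrow> real" where
  "wt_long_up L M = 4 / ((L + M + 4) * (L + M + 2))"

lemma qC_recurrence:
  assumes "0 \<le> m" and "l < 2 * n"
  shows "qC l m n =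
      wt_down l m * qC (l + 1) (m - 1) n + wt_up l m * qC (l + 1) (m + 1) n
    + wt_down2 l m * qC (l + 2) (m - 2) n
    + wt_long_down l m * qC (l + 3) (m - 1) n + wt_long_up l m * qC (l + 3) (m + 1) n"
  using assms
  by (subst qC.simps)
     (simp add: Let_def wt_down_def wt_up_def wt_down2_def wt_long_down_def wt_long_up_def)

lemma wt_nonneg:
  fixes L M :: real
  assumes "0 \<le> M" and "M \<le> L"
  shows "0 \<le> wt_down L M" "0 \<le> wt_up L M" "0 \<le> wt_down2 L M"
    "0 \<le> wt_long_down L M" "0 \<le> wt_long_up L M"
  using assms by (simp_all add: wt_down_def wt_up_def wt_down2_def wt_long_down_def wt_long_up_def)

lemma wt_mult_denom:
  fixes L M :: real
  assumes "0 \<le> M" and "M \<le> L"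
  shows "wt_down L M * (L - M + 2) = L - M"
    "wt_up L M * (L + M + 2) = L - M + 2"
    "wt_down2 L M * (L - M + 4) = 2"
    "wt_long_down L M * (L + M + 2) = 2"
    "wt_long_up L M * ((L + M + 4) * (L + M + 2)) = 4"
  using assms
  by (simp_all add: wt_down_def wt_up_def wt_down2_def wt_long_down_def wt_long_up_def divide_simps)

lemma qC_nonneg: "m \<le> int l \<Longrightarrow> 0 \<le> qC l m n"
proof (induction "2 * n - l" arbitrary: l m rule: less_induct)
  case less
  consider "m < 0" | "2 * n < l" | "l = 2 * n" | "0 \<le> m" "l < 2 * n"
    by linarith
  then show ?case
  proof cases
    case 4
    have IH: "0 \<le> qC (l + i) m' n" if "0 < i" "m' \<le> int (l + i)" for i m'
      using less.hyps[of "l + i" m'] that \<open>l < 2 * n\<close> by simp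
    show ?thesis
      unfolding qC_recurrence[OF 4]
      using wt_nonneg[of "real_of_int m" "real l"] 4 less.prems
      by (intro add_nonneg_nonneg mult_nonneg_nonneg IH) auto
  qed (simp_all add: qC_eq_0_if_neg qC_eq_0_if_beyond qC_end)
qed

lemma qC_first_terms_le:
  assumes "0 \<le> m" and "m \<le> int l"
  shows "wt_down l m * qC (l + 1) (m - 1) n + wt_up l m * qC (l + 1) (m + 1) n \<le> qC l m n"
proof (cases "l < 2 * n")
  case True
  have "0 \<le> wt_down2 l m * qC (l + 2) (m - 2) n" "0 \<le> wt_long_down l m * qC (l + 3) (m - 1) n"
    "0 \<le> wt_long_up l m * qC (l + 3) (m + 1) n"
    using wt_nonneg[of "real_of_int m" "real l"] assms
    by (intro mult_nonneg_nonneg qC_nonneg; simp)+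
  then show ?thesis
    unfolding qC_recurrence[OF assms(1) True] by linarith
next
  case False
  then show ?thesis
    using qC_nonneg[of m l n] assms by (simp add: qC_eq_0_if_beyond)
qed

lemma qC_down_le:
  assumes "0 \<le> m" and "m \<le> int l"
  shows "(real l - m) * qC (l + 1) (m - 1) n \<le> (real l - m + 2) * qC l m n"
proof -
  have "0 \<le> wt_up l m * qC (l + 1) (m + 1) n"
    using wt_nonneg(2)[of "real_of_int m" "real l"] assms by (simp add: qC_nonneg)
  then have "wt_down l m * qC (l + 1) (m - 1) n \<le> qC l m n"
    using qC_first_terms_le[of m l n] assms by linarith
  then have "(real l - m + 2) * (wt_down l m * qC (l + 1) (m - 1) n) \<le> (real l - m + 2) * qC l m n"
    using assms by (intro mult_left_mono) auto
  then show ?thesis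
    using wt_mult_denom(1)[of "real_of_int m" "real l"] assms
    by (simp add: mult.assoc [symmetric] mult.commute)
qed

lemma qC_up_le:
  assumes "0 \<le> m" and "m \<le> int l"
  shows "(real l - m + 2) * qC (l + 1) (m + 1) n \<le> (real l + m + 2) * qC l m n"
proof -
  have "0 \<le> wt_down l m * qC (l + 1) (m - 1) n"
    using wt_nonneg(1)[of "real_of_int m" "real l"] assms by (simp add: qC_nonneg)
  then have "wt_up l m * qC (l + 1) (m + 1) n \<le> qC l m n"
    using qC_first_terms_le[of m l n] assms by linarith
  then have "(real l + m + 2) * (wt_up l m * qC (l + 1) (m + 1) n) \<le> (real l + m + 2) * qC l m n"
    using assms by (intro mult_left_mono) auto
  then show ?thesis
    using wt_mult_denom(2)[of "real_of_int m" "real l"] assms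
    by (simp add: mult.assoc [symmetric] mult.commute)
qed

(* In (M+3) Q_l(m) - (M+1) Q_l(m+2), the net coefficient of the value Q(m+1) of a column that
   is reached from heights m and m+2 by steps with weights a (down) and b (up), once the
   induction hypothesis has bounded Q(m-1) below by M/(M+2) Q(m+1) and Q(m+3) above by
   (M+4)/(M+2) Q(m+1). down2_coeff is the analogue for the column l+2, with Q(m-2) bounded
   below by r Q(m). *)
definition pair_coeff ::
    "(real \<Rightarrow> real \<Rightarrow> real) \<Rightarrow> (real \<Rightarrow> real \<Rightarrow> real) \<Rightarrow> real \<Rightarrow> real \<Rightarrow> real" where
  "pair_coeff a b L M =
     (M + 3) * (a L M * (M / (M + 2)) + b L M) - (M + 1) * (a L (M + 2) + b L (M + 2) * ((M + 4) / (M + 2)))"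

definition down2_coeff :: "real \<Rightarrow> real \<Rightarrow> real \<Rightarrow> real" where
  "down2_coeff L M r = (M + 3) * wt_down2 L M * r - (M + 1) * wt_down2 L (M + 2)"

definition long_pair_deficit :: "real \<Rightarrow> real \<Rightarrow> real" where
  "long_pair_deficit L M = 4 * (L - M + 2) / ((L + M + 2) * (L + M + 4) * (M + 2))"

lemma nonneg_if_mult_pos_eq:
  fixes x d p :: real
  assumes "x * d = p" and "0 < d" and "0 \<le> p"
  shows "0 \<le> x"
  using assms by (auto simp: zero_le_mult_iff)

lemma divide_mult_cancel_real: "(b :: real) \<noteq> 0 \<Longrightarrow> a / b * b = a"
  by simp

lemma pair_coeff_long_lower:
  fixes L M :: real
  assumes "0 \<le> M" and "M + 2 \<le> L"
  shows "- long_pair_deficit L M \<le> pair_coeff wt_long_down wt_long_up L M"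
proof -
  define t where "t = L - M - 2"
  have L: "L = M + t + 2" and "0 \<le> t"
    using assms by (simp_all add: t_def)
  have M_range: "0 \<le> M" "M \<le> L" and M2_range: "0 \<le> M + 2" "M + 2 \<le> L"
    using assms by simp_all
  have ratios: "M / (M + 2) * (M + 2) = M" "(M + 4) / (M + 2) * (M + 2) = M + 4"
    "long_pair_deficit L M * ((L + M + 2) * (L + M + 4) * (M + 2)) = 4 * (L - M + 2)"
    unfolding long_pair_deficit_def using assms by (intro divide_mult_cancel_real; simp)+
  \<comment> \<open>algebra uses these equations only when they are oriented as value = weight * denominator\<close>
  have "(pair_coeff wt_long_down wt_long_up L M + long_pair_deficit L M)
      * ((L + M + 2) * (M + 2) * (L + M + 4) * (L + M + 6))
    = 128 + 8*t + 128*M + 4*M*t + 56*M*M + 4*M*M*t + 8*M*M*M"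
    unfolding pair_coeff_def
    using ratios[symmetric] wt_mult_denom(4,5)[OF M_range, symmetric]
      wt_mult_denom(4,5)[OF M2_range, symmetric] L
    by algebra
  then have "0 \<le> pair_coeff wt_long_down wt_long_up L M + long_pair_deficit L M"
    by (rule nonneg_if_mult_pos_eq) (use assms \<open>0 \<le> t\<close> in auto)
  then show ?thesis by simp
qed

lemma down2_coeff_nonpos:
  fixes L M :: real
  assumes "0 \<le> M" and "M + 2 \<le> L"
  shows "down2_coeff L M ((M - 1) / (M + 1)) \<le> 0"
proof -
  define t where "t = L - M - 2"
  have L: "L = M + t + 2" and "0 \<le> t"
    using assms by (simp_all add: t_def)
  have M_range: "0 \<le> M" "M \<le> L" and M2_range: "0 \<le> M + 2" "M + 2 \<le> L"
    using assms by simp_all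
  have ratio: "(M - 1) / (M + 1) * (M + 1) = M - 1"
    using assms by (intro divide_mult_cancel_real) simp
  have "- down2_coeff L M ((M - 1) / (M + 1)) * ((L - M + 4) * (M + 1) * (L - M + 2))
    = 36 + 8*t + 8*M + 4*M*M"
    unfolding down2_coeff_def
    using ratio[symmetric] wt_mult_denom(3)[OF M_range, symmetric]
      wt_mult_denom(3)[OF M2_range, symmetric] L
    by algebra
  then have "0 \<le> - down2_coeff L M ((M - 1) / (M + 1))"
    by (rule nonneg_if_mult_pos_eq) (use assms \<open>0 \<le> t\<close> in auto)
  then show ?thesis by simp
qed

lemma pair_coeff_short_lower:
  fixes L M :: real
  assumes "1 \<le> M" and "M + 2 \<le> L"
  shows "long_pair_deficit L M * ((L + M + 4) / (L - M))
    \<le> pair_coeff wt_down wt_up L M + down2_coeff L M ((M - 1) / (M + 1)) * ((L - M + 2) / (L - M))"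
proof -
  define u t where "u = M - 1" and "t = L - M - 2"
  have M: "M = u + 1" and L: "L = u + t + 3" and "0 \<le> u" "0 \<le> t"
    using assms by (simp_all add: u_def t_def)
  have M_range: "0 \<le> M" "M \<le> L" and M2_range: "0 \<le> M + 2" "M + 2 \<le> L"
    using assms by simp_all
  have ratios: "M / (M + 2) * (M + 2) = M" "(M + 4) / (M + 2) * (M + 2) = M + 4"
    "(M - 1) / (M + 1) * (M + 1) = M - 1"
    "(L - M + 2) / (L - M) * (L - M) = L - M + 2" "(L + M + 4) / (L - M) * (L - M) = L + M + 4"
    "long_pair_deficit L M * ((L + M + 2) * (L + M + 4) * (M + 2)) = 4 * (L - M + 2)"
    unfolding long_pair_deficit_def using assms by (intro divide_mult_cancel_real; simp)+
  have "(pair_coeff wt_down wt_up L M + down2_coeff L M ((M - 1) / (M + 1)) * ((L - M + 2) / (L - M))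
      - long_pair_deficit L M * ((L + M + 4) / (L - M)))
      * ((L - M + 2) * (M + 2) * (L + M + 2) * (L - M) * (L + M + 4) * (L - M + 4) * (M + 1))
    = 768 + 4544*t + 3040*t*t + 672*t*t*t + 48*t*t*t*t + 13824*u + 15072*u*t + 6592*u*t*t
      + 1200*u*t*t*t + 76*u*t*t*t*t + 13056*u*u + 10272*u*u*t + 3688*u*u*t*t + 580*u*u*t*t*t
      + 32*u*u*t*t*t*t + 4448*u*u*u + 2512*u*u*u*t + 744*u*u*u*t*t + 96*u*u*u*t*t*t
      + 4*u*u*u*t*t*t*t + 640*u*u*u*u + 208*u*u*u*u*t + 48*u*u*u*u*t*t + 4*u*u*u*u*t*t*t
      + 32*u*u*u*u*u"
    unfolding pair_coeff_def down2_coeff_def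
    using ratios[symmetric] wt_mult_denom(1-3)[OF M_range, symmetric]
      wt_mult_denom(1-3)[OF M2_range, symmetric] M L
    by algebra
  then have "0 \<le> pair_coeff wt_down wt_up L M + down2_coeff L M ((M - 1) / (M + 1)) * ((L - M + 2) / (L - M))
      - long_pair_deficit L M * ((L + M + 4) / (L - M))"
    by (rule nonneg_if_mult_pos_eq) (use assms \<open>0 \<le> u\<close> \<open>0 \<le> t\<close> in auto)
  then show ?thesis by simp
qed

lemma pair_coeff_short_lower_0:
  fixes L M :: real
  assumes "M = 0" and "M + 2 \<le> L"
  shows "long_pair_deficit L M * ((L + M + 4) / (L - M))
    \<le> pair_coeff wt_down wt_up L M + down2_coeff L M 0 * ((L - M + 2) / (L - M))"
proof -
  define t where "t = L - 2"
  have L: "L = t + 2" and "0 \<le> t"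
    using assms by (simp_all add: t_def)
  have M_range: "0 \<le> M" "M \<le> L" and M2_range: "0 \<le> M + 2" "M + 2 \<le> L"
    using assms by simp_all
  have ratios: "M / (M + 2) * (M + 2) = M" "(M + 4) / (M + 2) * (M + 2) = M + 4"
    "(L - M + 2) / (L - M) * (L - M) = L - M + 2" "(L + M + 4) / (L - M) * (L - M) = L + M + 4"
    "long_pair_deficit L M * ((L + M + 2) * (L + M + 4) * (M + 2)) = 4 * (L - M + 2)"
    unfolding long_pair_deficit_def using assms by (intro divide_mult_cancel_real; simp)+
  have "(pair_coeff wt_down wt_up L M + down2_coeff L M 0 * ((L - M + 2) / (L - M))
      - long_pair_deficit L M * ((L + M + 4) / (L - M)))
      * ((L - M + 2) * (M + 2) * (L + M + 2) * (L - M) * (L + M + 4))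
    = 128 + 256*t + 104*t*t + 12*t*t*t"
    unfolding pair_coeff_def down2_coeff_def
    using ratios[symmetric] wt_mult_denom(1-3)[OF M_range, symmetric]
      wt_mult_denom(1-3)[OF M2_range, symmetric] assms(1) L
    by algebra
  then have "0 \<le> pair_coeff wt_down wt_up L M + down2_coeff L M 0 * ((L - M + 2) / (L - M))
      - long_pair_deficit L M * ((L + M + 4) / (L - M))"
    by (rule nonneg_if_mult_pos_eq) (use assms \<open>0 \<le> t\<close> in auto)
  then show ?thesis by simp
qed

lemma recurrence_sums_diff_eq:
  fixes L M r x0 x1 x2 y0 y1 z0 z1 z2 :: real
  shows "(M + 3) * (wt_down L M * x0 + wt_up L M * x1 + wt_down2 L M * y0
            + wt_long_down L M * z0 + wt_long_up L M * z1)
      - (M + 1) * (wt_down L (M + 2) * x1 + wt_up L (M + 2) * x2 + wt_down2 L (M + 2) * y1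
            + wt_long_down L (M + 2) * z1 + wt_long_up L (M + 2) * z2)
    = (M + 3) * wt_down L M * (x0 - M / (M + 2) * x1)
      + (M + 1) * wt_up L (M + 2) * ((M + 4) / (M + 2) * x1 - x2)
      + (M + 3) * wt_down2 L M * (y0 - r * y1)
      + (M + 3) * wt_long_down L M * (z0 - M / (M + 2) * z1)
      + (M + 1) * wt_long_up L (M + 2) * ((M + 4) / (M + 2) * z1 - z2)
      + pair_coeff wt_down wt_up L M * x1 + down2_coeff L M r * y1
      + pair_coeff wt_long_down wt_long_up L M * z1"
  unfolding pair_coeff_def down2_coeff_def
  by (simp add: algebra_simps add_divide_distrib diff_divide_distrib)

lemma dominated_combination_nonneg:
  fixes a b c g k2 k3 x y z :: real
  assumes "b \<le> 0" and "- g \<le> c" and "0 \<le> g" and "0 \<le> x" and "0 \<le> z"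
    and "y \<le> k2 * x" and "z \<le> k3 * x" and "g * k3 \<le> a + b * k2"
  shows "0 \<le> a * x + b * y + c * z"
proof -
  have "0 \<le> (a + b * k2 - g * k3) * x"
    using assms(4,8) by simp
  also have "\<dots> = a * x + b * (k2 * x) - g * (k3 * x)"
    by (simp add: algebra_simps)
  also have "\<dots> \<le> a * x + b * y + c * z"
  proof -
    have "b * (k2 * x) \<le> b * y"
      using assms(6,1) by (rule mult_left_mono_neg)
    moreover have "g * z \<le> g * (k3 * x)"
      using assms(7,3) by (rule mult_left_mono)
    moreover have "- g * z \<le> c * z"
      using assms(2,5) by (rule mult_right_mono)
    ultimately show ?thesis by linarith
  qed
  finally show ?thesis .
qed

(* x, y, z are the columns l+1, l+2, l+3 of the path counts: x0, x1, x2 at heights m-1, m+1, m+3,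
   y0, y1 at heights m-2, m, and z0, z1, z2 at heights m-1, m+1, m+3. *)
lemma recurrence_sums_ratio_le:
  fixes L M x0 x1 x2 y0 y1 z0 z1 z2 :: real
  assumes "M \<in> \<nat>" and "M + 2 \<le> L"
    and "0 \<le> x1" "0 \<le> y0" "0 \<le> z1"
    and x: "M * x1 \<le> (M + 2) * x0" "(M + 2) * x2 \<le> (M + 4) * x1"
    and y: "(M - 1) * y1 \<le> (M + 1) * y0"
    and z: "M * z1 \<le> (M + 2) * z0" "(M + 2) * z2 \<le> (M + 4) * z1"
    and yx: "(L - M) * y1 \<le> (L - M + 2) * x1" and zx: "(L - M) * z1 \<le> (L + M + 4) * x1"
  shows "(M + 1) * (wt_down L (M + 2) * x1 + wt_up L (M + 2) * x2 + wt_down2 L (M + 2) * y1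
            + wt_long_down L (M + 2) * z1 + wt_long_up L (M + 2) * z2)
       \<le> (M + 3) * (wt_down L M * x0 + wt_up L M * x1 + wt_down2 L M * y0
            + wt_long_down L M * z0 + wt_long_up L M * z1)"
proof -
  have "0 \<le> M" using assms(1) by (cases rule: Nats_cases) simp
  \<comment> \<open>for M = 0 the bound y is too weak, and r = 0, i.e. y0 \<ge> 0, is used instead\<close>
  obtain r where y_ratio: "r * y1 \<le> y0" and y_coeff: "down2_coeff L M r \<le> 0"
    and x_coeff: "long_pair_deficit L M * ((L + M + 4) / (L - M))
      \<le> pair_coeff wt_down wt_up L M + down2_coeff L M r * ((L - M + 2) / (L - M))"
  proof (cases "M = 0")
    case True
    then show ?thesis
      using that[of 0] pair_coeff_short_lower_0[of M L] wt_nonneg(3)[of 2 L] assms(2) \<open>0 \<le> y0\<close>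
      by (simp add: down2_coeff_def)
  next
    case False
    with assms(1) have "1 \<le> M" by (cases rule: Nats_cases) simp
    then show ?thesis
      using that[of "(M - 1) / (M + 1)"] pair_coeff_short_lower[of M L] down2_coeff_nonpos[of M L]
        y assms(2)
      by (simp add: field_simps)
  qed
  have z_coeff: "- long_pair_deficit L M \<le> pair_coeff wt_long_down wt_long_up L M"
    using pair_coeff_long_lower \<open>0 \<le> M\<close> assms(2) .
  have "0 \<le> long_pair_deficit L M"
    unfolding long_pair_deficit_def using \<open>0 \<le> M\<close> assms(2) by simp
  have slack: "M / (M + 2) * x1 \<le> x0" "x2 \<le> (M + 4) / (M + 2) * x1"
      "M / (M + 2) * z1 \<le> z0" "z2 \<le> (M + 4) / (M + 2) * z1"
      "y1 \<le> (L - M + 2) / (L - M) * x1" "z1 \<le> (L + M + 4) / (L - M) * x1"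
    using x z yx zx \<open>0 \<le> M\<close> assms(2) by (simp_all add: field_simps)
  have "0 \<le> pair_coeff wt_down wt_up L M * x1 + down2_coeff L M r * y1
      + pair_coeff wt_long_down wt_long_up L M * z1"
    using y_coeff z_coeff \<open>0 \<le> long_pair_deficit L M\<close> \<open>0 \<le> x1\<close> \<open>0 \<le> z1\<close> slack(5,6) x_coeff
    by (rule dominated_combination_nonneg)
  moreover have "0 \<le> (M + 3) * wt_down L M * (x0 - M / (M + 2) * x1)
      + (M + 1) * wt_up L (M + 2) * ((M + 4) / (M + 2) * x1 - x2)
      + (M + 3) * wt_down2 L M * (y0 - r * y1)
      + (M + 3) * wt_long_down L M * (z0 - M / (M + 2) * z1)
      + (M + 1) * wt_long_up L (M + 2) * ((M + 4) / (M + 2) * z1 - z2)"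
    using wt_nonneg[of M L] wt_nonneg[of "M + 2" L] slack y_ratio \<open>0 \<le> M\<close> assms(2)
    by (simp add: add_nonneg_nonneg mult_nonneg_nonneg)
  ultimately show ?thesis
    using recurrence_sums_diff_eq[of M L x0 x1 y0 z0 z1 x2 y1 z2 r] by linarith
qed

lemma qC_ratio_step_from_later_columns:
  assumes IH: "\<And>l' m'. l < l' \<Longrightarrow> -2 \<le> m' \<Longrightarrow> m' + 2 \<le> int l' \<Longrightarrow>
      (of_int m' + 1) * qC l' (m' + 2) n \<le> (of_int m' + 3) * qC l' m' n"
    and "0 \<le> m" and "m + 2 \<le> int l" and "l < 2 * n"
  shows "(of_int m + 1) * qC l (m + 2) n \<le> (of_int m + 3) * qC l m n"
proof -
  define M where "M = real_of_int m"
  have x: "M * qC (l + 1) (m + 1) n \<le> (M + 2) * qC (l + 1) (m - 1) n"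
      "(M + 2) * qC (l + 1) (m + 3) n \<le> (M + 4) * qC (l + 1) (m + 1) n"
    using IH[of "l + 1" "m - 1"] IH[of "l + 1" "m + 1"] assms(2,3) by (simp_all add: M_def ac_simps)
  have y: "(M - 1) * qC (l + 2) m n \<le> (M + 1) * qC (l + 2) (m - 2) n"
    using IH[of "l + 2" "m - 2"] assms(2,3) by (simp add: M_def ac_simps)
  have z: "M * qC (l + 3) (m + 1) n \<le> (M + 2) * qC (l + 3) (m - 1) n"
      "(M + 2) * qC (l + 3) (m + 3) n \<le> (M + 4) * qC (l + 3) (m + 1) n"
    using IH[of "l + 3" "m - 1"] IH[of "l + 3" "m + 1"] assms(2,3) by (simp_all add: M_def ac_simps)
  have yx: "(real l - M) * qC (l + 2) m n \<le> (real l - M + 2) * qC (l + 1) (m + 1) n"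
    using qC_down_le[of "m + 1" "l + 1" n] assms(2,3) by (simp add: M_def)
  have "(real l - M) * qC (l + 3) (m + 1) n \<le> (real l - M + 2) * qC (l + 2) (m + 2) n"
    using qC_down_le[of "m + 2" "l + 2" n] assms(2,3) by (simp add: M_def ac_simps numeral_eq_Suc)
  also have "\<dots> \<le> (real l + M + 4) * qC (l + 1) (m + 1) n"
    using qC_up_le[of "m + 1" "l + 1" n] assms(2,3) by (simp add: M_def ac_simps)
  finally have zx: "(real l - M) * qC (l + 3) (m + 1) n \<le> (real l + M + 4) * qC (l + 1) (m + 1) n" .
  have "M \<in> \<nat>"
    unfolding M_def using of_nat_nat[OF \<open>0 \<le> m\<close>] of_nat_in_Nats by metis
  have "M + 2 \<le> real l" using assms(3) by (simp add: M_def)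
  have nonneg: "0 \<le> qC (l + 1) (m + 1) n" "0 \<le> qC (l + 2) (m - 2) n" "0 \<le> qC (l + 3) (m + 1) n"
    using assms(3) by (simp_all add: qC_nonneg)
  have rec2: "qC l (m + 2) n =
      wt_down l (M + 2) * qC (l + 1) (m + 1) n + wt_up l (M + 2) * qC (l + 1) (m + 3) n
    + wt_down2 l (M + 2) * qC (l + 2) m n
    + wt_long_down l (M + 2) * qC (l + 3) (m + 1) n + wt_long_up l (M + 2) * qC (l + 3) (m + 3) n"
    using qC_recurrence[of "m + 2" l n] assms(2,4) by (simp add: M_def ac_simps)
  show ?thesis
    unfolding rec2 qC_recurrence[OF assms(2,4)] M_def[symmetric]
    by (rule recurrence_sums_ratio_le[OF \<open>M \<in> \<nat>\<close> \<open>M + 2 \<le> real l\<close> nonneg x y z yx zx])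
qed

(* The cases m = -2 and m = -1 are included so that the induction hypothesis also covers the
   column l + 2 at height m - 2. *)
lemma qC_ratio_step:
  assumes "-2 \<le> m" and "m + 2 \<le> int l"
  shows "(of_int m + 1) * qC l (m + 2) n \<le> (of_int m + 3) * qC l m n"
  using assms
proof (induction "2 * n - l" arbitrary: l m rule: less_induct)
  case less
  consider "m < 0" | "0 \<le> m" "2 * n \<le> l" | "0 \<le> m" "l < 2 * n"
    by linarith
  then show ?case
  proof cases
    case 1
    then have "m = -2 \<or> m = -1" using less.prems by auto
    then show ?thesis using qC_nonneg[of 0 l n] by (auto simp: qC_eq_0_if_neg)
  next
    case 2
    then have "qC l (m + 2) n = 0"
      by (cases "l = 2 * n") (simp_all add: qC_end qC_eq_0_if_beyond)
    then show ?thesis using qC_nonneg[of m l n] 2 less.prems by simp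
  next
    case 3
    show ?thesis
    proof (rule qC_ratio_step_from_later_columns)
      show "(of_int m' + 1) * qC l' (m' + 2) n \<le> (of_int m' + 3) * qC l' m' n"
        if "l < l'" "-2 \<le> m'" "m' + 2 \<le> int l'" for l' m'
        using less.hyps[of l' m'] that 3 by simp
    qed (use 3 less.prems in auto)
  qed
qed

lemma qC_div_succ_le:
  assumes "0 \<le> j" and "j \<le> k" and "k \<le> int l" and "even (k - j)"
  shows "qC l k n / of_int (k + 1) \<le> qC l j n / of_int (j + 1)"
proof -
  define p where "p = nat ((k - j) div 2)"
  have k: "k = j + 2 * int p"
    using assms(2,4) by (auto simp: p_def elim!: evenE)
  have "qC l (j + 2 * int p) n / of_int (j + 2 * int p + 1) \<le> qC l j n / of_int (j + 1)"
    using assms(3) unfolding k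
  proof (induction p)
    case (Suc p)
    have "(of_int (j + 2 * int p) + 1) * qC l (j + 2 * int p + 2) n
        \<le> (of_int (j + 2 * int p) + 3) * qC l (j + 2 * int p) n"
      using Suc.prems assms(1) by (intro qC_ratio_step) auto
    then have "qC l (j + 2 * int (Suc p)) n / of_int (j + 2 * int (Suc p) + 1)
        \<le> qC l (j + 2 * int p) n / of_int (j + 2 * int p + 1)"
      using assms(1) by (simp add: divide_simps ac_simps)
    also have "\<dots> \<le> qC l j n / of_int (j + 1)"
      using Suc by simp
    finally show ?case .
  qed simp
  then show ?thesis unfolding k .
qed

theorem lemma5p4:
  fixes n l :: nat and j k :: int
  assumes "n \<ge> 10" and "0 \<le> j" and "j < k" and "k \<le> int l" and "l \<le> 2 * n"
    and "even (k - j)"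
  shows "qC l j n / real_of_int (j + 1) \<ge> qC l k n / real_of_int (k + 1)"
  using qC_div_succ_le[of j k l n] assms by simp

end
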